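(* Assume (A1), (A2), and let $M^*>0$ be such that $\pi^\mu\in\mathscr P^{M^*}_{\beta^*}$ for every $\mu\in\mathscr P^{M^*}_{\beta^*}$. Assume further: (A31) for every $\mu\in\mathscr P^{M^*}_{\beta^*}$ there is a function $h_\mu:[0,\infty)\to[0,\infty)$ with $\lim_{t\to\infty}h_\mu(t)=0$ such that $\|\pi^\mu-\delta_xP^\mu_t\|_{\rm var}\le(1+|x|^{\beta^*})h_\mu(t)$ for all $x\in\mathbb R^d$, $t\ge0$; (A32) for every $n\ge1$ and $\mu\in\mathscr P^{M^*}_{\beta^*}$ there is $K_{n,\mu}>0$ with $\langle x-y,b(x,\mu)-b(y,\mu)\rangle\le K_{n,\mu}|x-y|^2$ for all $x,y$ with $|x|\vee|y|\le n$, and $\sup_{|x|\le n}|b(x,\bar\mu)-b(x,\mu)|\to0$ as $\bar\mu\to\mu$ weakly with $\bar\mu\in\mathscr P^{M^*}_{\beta^*}$. Then for every $f\in C_b(\mathbb R^d)$ and $\mu\in\mathscr P^{M^*}_{\beta^*}$, $|\pi^{\bar\mu}(f)-\pi^\mu(f)|\to0$ as $\bar\mu\to\mu$ weakly with $\bar\mu\in\mathscr P^{M^*}_{\beta^*}$. In particular the map $\mathscr P^{M^*}_{\beta^*}\ni\mu\mapsto\pi^\mu$ is weakly continuous.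
   Context: Setting. $d\ge1$; $\mathscr P(\mathbb R^d)$ is the set of Borel probability measures on $\mathbb R^d$, $\mu(f):=\int f\,\mathrm d\mu$; for $p>0$, $\mathscr P_p=\{\mu:\mu(|\cdot|^p)<\infty\}$ and for $M>0$, $\mathscr P_p^M=\{\mu\in\mathscr P_p:\mu(|\cdot|^p)\le M\}$. $\|\cdot\|_{\rm var}$ is the total variation norm. $(Z_t)$ is a $d$-dimensional pure jump Lévy process whose Lévy measure $\nu$ satisfies $\nu(|\cdot|^2\mathbf 1_{\{|\cdot|\le1\}})+\nu(|\cdot|^{\beta_*}\mathbf 1_{\{|\cdot|>1\}})<\infty$ for some $\beta_*\in(0,2]$. $b:\mathbb R^d\times\mathscr P(\mathbb R^d)\to\mathbb R^d$. For fixed $\mu$, $(Y^\mu_t)$ solves $\mathrm dY^\mu_t=b(Y^\mu_t,\mu)\mathrm dt+\mathrm dZ_t$, $(P^\mu_t)$ is its semigroup, $\delta_xP^\mu_t$ the law of $Y^\mu_t$ started at $x$; IPM means invariant probability measure. (A1): there are constants $\beta\in(0,\beta_*]$, $\lambda_1,\lambda_2,C_b,\theta_1,\theta_3,\theta_4>0$, $\theta_2\ge0$ with $\theta_1\ge1-\beta/2$, $\theta_2<1+\theta_1$, $\theta_3\in(0,\beta^*]$, where $\beta^*:=\beta+\theta_1-1$ and $\gamma_1:=(\beta+\theta_2-2)^+/\beta^*\in[0,1)$, and either (i) $\beta^*(1-\gamma_1)>\theta_3\theta_4$, or (ii) $\beta^*(1-\gamma_1)=\theta_3\theta_4$ and $\lambda_1>\lambda_2$,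 such that for all $x\in\mathbb R^d$, $\mu\in\mathscr P_{\beta^*}$: $\langle x,b(x,\mu)\rangle\le C_b-\lambda_1|x|^{1+\theta_1}+\lambda_2(1+|x|^2)^{\theta_2/2}\mu(|\cdot|^{\theta_3})^{\theta_4}$. (A2): for every $\mu\in\mathscr P_{\beta^*}$, $(Y^\mu_t)$ is a $C_b$-Feller process and has a unique IPM $\pi^\mu$. *)

theory Defs
  imports "HOL-Probability.Probability"
begin

definition prob_measures :: "'a::euclidean_space measure set" where
  "prob_measures = {\<mu>. prob_space \<mu> \<and> sets \<mu> = sets borel}"

definition moment :: "real \<Rightarrow> 'a::euclidean_space measure \<Rightarrow> ennreal" where
  "moment p \<mu> = (\<integral>\<^sup>+ x. ennreal (norm x powr p) \<partial>\<mu>)"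

definition Pp :: "real \<Rightarrow> 'a::euclidean_space measure set" where
  "Pp p = {\<mu> \<in> prob_measures. moment p \<mu> < \<infinity>}"

definition PpM :: "real \<Rightarrow> real \<Rightarrow> 'a::euclidean_space measure set" where
  "PpM p Mb = {\<mu> \<in> prob_measures. moment p \<mu> \<le> ennreal Mb}"

definition weak_conv_seq :: "(nat \<Rightarrow> 'a::euclidean_space measure) \<Rightarrow> 'a measure \<Rightarrow> bool" where
  "weak_conv_seq \<mu>s \<mu> \<longleftrightarrow>
     (\<forall>f :: 'a \<Rightarrow> real. continuous_on UNIV f \<and> bounded (range f) \<longrightarrow>
        (\<lambda>n. \<integral>x. f x \<partial>(\<mu>s n)) \<longlonglongrightarrow> (\<integral>x. f x \<partial>\<mu>))"

definition var_norm_diff :: "'a::euclidean_space measure \<Rightarrow> 'a measure \<Rightarrow> real" where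
  "var_norm_diff \<mu> \<nu> =
     (SUP f \<in> {f :: 'a \<Rightarrow> real. f \<in> borel_measurable borel \<and> (\<forall>x. \<bar>f x\<bar> \<le> 1)}.
        \<bar>(\<integral>x. f x \<partial>\<mu>) - (\<integral>x. f x \<partial>\<nu>)\<bar>)"

definition levy_measure_cond :: "'a::euclidean_space measure \<Rightarrow> real \<Rightarrow> bool" where
  "levy_measure_cond \<nu> \<beta>s \<longleftrightarrow>
     sets \<nu> = sets borel \<and> emeasure \<nu> {0} = 0 \<and>
     (\<integral>\<^sup>+ z. ennreal (norm z ^ 2 * indicator (cball 0 1) z) \<partial>\<nu>)
       + (\<integral>\<^sup>+ z. ennreal (norm z powr \<beta>s * indicator (- cball 0 1) z) \<partial>\<nu>) < \<infinity>"

definition levy_exponent :: "'a::euclidean_space measure \<Rightarrow> 'a \<Rightarrow> complex" where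
  "levy_exponent \<nu> \<xi> =
     (\<integral>z. (cis (\<xi> \<bullet> z) - 1 - \<i> * complex_of_real (\<xi> \<bullet> z) * indicator (cball 0 1) z) \<partial>\<nu>)"

definition pure_jump_levy :: "'w measure \<Rightarrow> 'a::euclidean_space measure \<Rightarrow> (real \<Rightarrow> 'w \<Rightarrow> 'a) \<Rightarrow> bool" where
  "pure_jump_levy M \<nu> Z \<longleftrightarrow>
     prob_space M \<and>
     (\<forall>t. Z t \<in> borel_measurable M) \<and>
     (\<forall>\<omega>\<in>space M. Z 0 \<omega> = 0) \<and>
     (\<forall>\<omega>\<in>space M. \<forall>t\<ge>0. continuous (at_right t) (\<lambda>s. Z s \<omega>) \<and>
                              (t > 0 \<longrightarrow> (\<exists>l. ((\<lambda>s. Z s \<omega>) \<longlongrightarrow> l) (at_left t)))) \<and>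
     (\<forall>s t. 0 \<le> s \<longrightarrow> s \<le> t \<longrightarrow>
        prob_space.indep_set M
          (sigma_sets (space M) (\<Union>u\<in>{0..s}. {Z u -` B \<inter> space M | B. B \<in> sets borel}))
          {(\<lambda>\<omega>. Z t \<omega> - Z s \<omega>) -` B \<inter> space M | B. B \<in> sets borel}) \<and>
     (\<forall>s t \<xi>. 0 \<le> s \<longrightarrow> s \<le> t \<longrightarrow>
        (\<integral>\<omega>. cis (\<xi> \<bullet> (Z t \<omega> - Z s \<omega>)) \<partial>M) = exp (complex_of_real (t - s) * levy_exponent \<nu> \<xi>))"

section \<open>The SDE dY = b(Y, mu) dt + dZ (pathwise, since the noise is additive)\<close>

definition sde_solution ::
  "'w measure \<Rightarrow> (real \<Rightarrow> 'w \<Rightarrow> 'a::euclidean_space) \<Rightarrow> ('a \<Rightarrow> 'a measure \<Rightarrow> 'a) \<Rightarrow> 'a measure \<Rightarrow> 'a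
     \<Rightarrow> (real \<Rightarrow> 'w \<Rightarrow> 'a) \<Rightarrow> bool" where
  "sde_solution M Z b \<mu> x Yx \<longleftrightarrow>
     (\<forall>t\<ge>0. Yx t \<in> borel_measurable M) \<and>
     (\<forall>\<omega>\<in>space M. \<forall>t\<ge>0.
        set_integrable lborel {0..t} (\<lambda>s. b (Yx s \<omega>) \<mu>) \<and>
        Yx t \<omega> = x + set_lebesgue_integral lborel {0..t} (\<lambda>s. b (Yx s \<omega>) \<mu>) + Z t \<omega>)"

text \<open>delta_x P^mu_t = law of Y^mu_t started at x\<close>
definition trans_law :: "'w measure \<Rightarrow> ('a::euclidean_space \<Rightarrow> real \<Rightarrow> 'w \<Rightarrow> 'a) \<Rightarrow> 'a \<Rightarrow> real \<Rightarrow> 'a measure" where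
  "trans_law M Y x t = distr M borel (Y x t)"

definition Cb_Feller :: "'w measure \<Rightarrow> ('a::euclidean_space \<Rightarrow> real \<Rightarrow> 'w \<Rightarrow> 'a) \<Rightarrow> bool" where
  "Cb_Feller M Y \<longleftrightarrow>
     (\<forall>t\<ge>0. \<forall>A\<in>sets borel. (\<lambda>x. measure (trans_law M Y x t) A) \<in> borel_measurable borel) \<and>
     (\<forall>s\<ge>0. \<forall>t\<ge>0. \<forall>x. \<forall>A\<in>sets borel.
        measure (trans_law M Y x (t + s)) A = (\<integral>y. measure (trans_law M Y y s) A \<partial>(trans_law M Y x t))) \<and>
     (\<forall>t\<ge>0. \<forall>f :: 'a \<Rightarrow> real. continuous_on UNIV f \<and> bounded (range f) \<longrightarrow>
        continuous_on UNIV (\<lambda>x. \<integral>y. f y \<partial>(trans_law M Y x t)))"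

definition invariant_pm :: "'w measure \<Rightarrow> ('a::euclidean_space \<Rightarrow> real \<Rightarrow> 'w \<Rightarrow> 'a) \<Rightarrow> 'a measure \<Rightarrow> bool" where
  "invariant_pm M Y \<pi> \<longleftrightarrow>
     \<pi> \<in> prob_measures \<and>
     (\<forall>t\<ge>0. \<forall>A\<in>sets borel. (\<integral>x. measure (trans_law M Y x t) A \<partial>\<pi>) = measure \<pi> A)"

end

theory Submission
  imports Defs
begin

text \<open>
  Invariance of \<open>\<pi>\<^sup>\<nu>\<close> gives \<open>\<pi>\<^sup>\<nu>(f) - \<pi>\<^sup>\<mu>(f) = \<pi>\<^sup>\<nu>(P\<^sup>\<nu>\<^sub>t f - \<pi>\<^sup>\<mu>(f))\<close> for every \<open>t\<close>,
  and the integrand splits as \<open>(P\<^sup>\<nu>\<^sub>t f - P\<^sup>\<mu>\<^sub>t f) + (P\<^sup>\<mu>\<^sub>t f - \<pi>\<^sup>\<mu>(f))\<close>.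
  By (A31) the second part is at most \<open>B (1 + |x|\<^sup>p) h\<^sub>\<mu>(t)\<close>, where \<open>B\<close> bounds \<open>|f|\<close> and
  \<open>p = \<beta>\<^sup>*\<close>; integrated against \<open>\<pi>\<^sup>\<nu>\<close>, whose \<open>p\<close>-th moment is at most \<open>M\<^sup>*\<close>, this is small
  for large \<open>t\<close>. The first part is at most \<open>2B \<le> 2B (|x|/R)\<^sup>p\<close> outside the ball of radius \<open>R\<close>,
  and it is uniformly small on that ball once \<open>\<nu>\<close> is close to \<open>\<mu>\<close>: the noise is additive, so the
  difference of two solutions driven by the same Levy path solves a noiseless integral equation, and
  the local one-sided Lipschitz bound together with the locally uniform convergence of the drifts
  yields pathwise convergence by a Gronwall argument. Dominated convergence and compactness of the
  ball turn this into uniform convergence of \<open>P\<^sup>\<nu>\<^sub>t f\<close> there. Taking \<open>R = t\<close>, all errors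
  vanish as \<open>t \<rightarrow> \<infinity>\<close>.
\<close>

lemma tendsto_zero_if_eventually_approx:
  fixes a :: "nat \<Rightarrow> real" and e :: "'i \<Rightarrow> real"
  assumes F: "F \<noteq> bot" and e: "(e \<longlongrightarrow> 0) F"
    and approx: "eventually (\<lambda>i. \<forall>\<delta>>0. eventually (\<lambda>k. \<bar>a k\<bar> \<le> e i + \<delta>) sequentially) F"
  shows "a \<longlonglongrightarrow> 0"
proof (rule LIMSEQ_I)
  fix r :: real assume r: "0 < r"
  have "eventually (\<lambda>i. e i < r / 2) F" using order_tendstoD(2)[OF e, of "r / 2"] r by simp
  with approx have
    "eventually (\<lambda>i. e i < r / 2 \<and> eventually (\<lambda>k. \<bar>a k\<bar> \<le> e i + r / 2) sequentially) F"
    by eventually_elim (use r in auto)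
  then obtain i where "e i < r / 2" and "eventually (\<lambda>k. \<bar>a k\<bar> \<le> e i + r / 2) sequentially"
    using eventually_happens'[OF F] by blast
  then have "eventually (\<lambda>k. norm (a k - 0) < r) sequentially"
    by (auto elim: eventually_mono)
  then show "\<exists>k0. \<forall>k\<ge>k0. norm (a k - 0) < r" by (simp add: eventually_sequentially)
qed

section \<open>Stability of noiseless integral equations\<close>

lemma real_interval_induct_small_steps:
  fixes t d :: real
  assumes t: "0 \<le> t" and d: "0 < d" and P0: "P 0"
    and step: "\<And>s u. 0 \<le> s \<Longrightarrow> s \<le> u \<Longrightarrow> u \<le> t \<Longrightarrow> u - s < d \<Longrightarrow> P s \<Longrightarrow> P u"
  shows "P t"
proof -
  obtain N :: nat where N: "t / d < real N" using reals_Archimedean2 by blast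
  then have N0: "0 < N" using t d by (metis divide_nonneg_pos of_nat_0_less_iff order_le_less_trans)
  define p where "p k = real k * t / real N" for k :: nat
  have "P (p k)" if "k \<le> N" for k
    using that
  proof (induction k)
    case 0
    then show ?case using P0 by (simp add: p_def)
  next
    case (Suc k)
    have "p (Suc k) - p k = t / real N" by (simp add: p_def field_simps add_divide_distrib)
    also have "\<dots> < d" using N N0 d by (simp add: field_simps)
    finally have "p (Suc k) - p k < d" .
    moreover have "p (Suc k) \<le> t"
      using Suc.prems t N0 mult_right_mono[of "real (Suc k)" "real N" t]
      by (simp add: p_def pos_divide_le_eq mult.commute)
    moreover have "0 \<le> p k" "p k \<le> p (Suc k)"
      using t by (simp_all add: p_def divide_right_mono mult_right_mono)
    ultimately show ?case using Suc by (auto intro: step[of "p k"])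
  qed
  from this[of N] show ?thesis using N0 by (simp add: p_def)
qed

lemma integral_Icc_increments_small:
  fixes f :: "real \<Rightarrow> real"
  assumes f: "f integrable_on {0..t}" and \<rho>: "0 < \<rho>"
  obtains d where "0 < d"
    and "\<And>s u. 0 \<le> s \<Longrightarrow> s \<le> u \<Longrightarrow> u \<le> t \<Longrightarrow> u - s < d \<Longrightarrow> integral {s..u} f < \<rho>"
proof -
  define G where "G s = integral {0..s} f" for s
  have "uniformly_continuous_on {0..t} G"
    unfolding G_def by (intro compact_uniformly_continuous indefinite_integral_continuous_1 f) simp
  then obtain d where d: "0 < d"
    and G_close: "\<And>s u. s \<in> {0..t} \<Longrightarrow> u \<in> {0..t} \<Longrightarrow> dist u s < d \<Longrightarrow> dist (G u) (G s) < \<rho>"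
    using \<rho> unfolding uniformly_continuous_on_def by metis
  show ?thesis
  proof (rule that[OF d])
    fix s u assume s: "0 \<le> s" and su: "s \<le> u" and u: "u \<le> t" and "u - s < d"
    then have "dist (G u) (G s) < \<rho>" by (intro G_close) (auto simp: dist_real_def)
    moreover have "integral {0..s} f + integral {s..u} f = integral {0..u} f"
      using s su u
      by (intro Henstock_Kurzweil_Integration.integral_combine integrable_subinterval_real[OF f])
        auto
    ultimately show "integral {s..u} f < \<rho>" by (simp add: G_def dist_real_def)
  qed
qed

lemma norm_integral_le_integral_norm_Icc:
  fixes g :: "real \<Rightarrow> 'a::euclidean_space"
  assumes gi: "g integrable_on {s..u}" and ngi: "(\<lambda>r. norm (g r)) integrable_on {s..u}"
    and r: "r \<in> {s..u}"
  shows "norm (integral {s..r} g) \<le> integral {s..u} (\<lambda>r. norm (g r))"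
proof -
  have "norm (integral {s..r} g) \<le> integral {s..r} (\<lambda>r. norm (g r))"
    using r by (intro integral_norm_bound_integral integrable_subinterval_real[OF gi]
        integrable_subinterval_real[OF ngi]) auto
  also have "\<dots> \<le> integral {s..u} (\<lambda>r. norm (g r))"
    using r by (intro integral_subset_le integrable_subinterval_real[OF ngi] ngi) auto
  finally show ?thesis .
qed

lemma sq_norm_le_of_dist_le:
  fixes a b :: "'a::real_normed_vector"
  assumes a: "norm a \<le> 1" and b: "norm b \<le> 1" and ab: "norm (a - b) \<le> c"
  shows "(norm a)\<^sup>2 \<le> (norm b)\<^sup>2 + 2 * c"
proof -
  have "(norm a + norm b) * (norm a - norm b) \<le> (norm a + norm b) * max 0 (norm a - norm b)"
    by (rule mult_left_mono) simp_all
  also have "\<dots> \<le> 2 * c"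
    using a b ab norm_triangle_ineq2[of a b] order_trans[OF norm_ge_zero ab]
    by (intro mult_mono) (simp_all add: max_def)
  finally show ?thesis by (simp add: power2_eq_square algebra_simps)
qed

lemma sq_norm_integral_step:
  fixes g D :: "real \<Rightarrow> 'a::euclidean_space"
  assumes K: "0 \<le> K" and su: "s \<le> u"
    and gi: "g integrable_on {s..u}" and ngi: "(\<lambda>r. norm (g r)) integrable_on {s..u}"
    and D: "\<And>r. r \<in> {s..u} \<Longrightarrow> D r = D s + integral {s..r} g"
    and mono: "\<And>r. r \<in> {s..u} \<Longrightarrow> norm (D r) \<le> 1 \<Longrightarrow> D r \<bullet> g r \<le> e + K * (norm (D r))\<^sup>2"
  defines "\<Gamma> \<equiv> integral {s..u} (\<lambda>r. norm (g r))"
  assumes D_s: "norm (D s) \<le> 1 / 2" and \<Gamma>_le: "\<Gamma> \<le> 1 / 2"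
  shows "(norm (D u))\<^sup>2
           \<le> (norm (D s))\<^sup>2 + (u - s) * (2 * (e + K * ((norm (D s))\<^sup>2 + 2 * \<Gamma>))) + 3 * \<Gamma>\<^sup>2"
proof -
  have dist_D: "norm (D r - D s) \<le> \<Gamma>" if r: "r \<in> {s..u}" for r
    using D[OF r] norm_integral_le_integral_norm_Icc[OF gi ngi r] by (simp add: \<Gamma>_def)
  have D_le_1: "norm (D r) \<le> 1" if r: "r \<in> {s..u}" for r
    using D_s dist_D[OF r] \<Gamma>_le norm_triangle_sub[of "D r" "D s"] by linarith
  define C where "C = 2 * (e + K * ((norm (D s))\<^sup>2 + 2 * \<Gamma>))"
  have pointwise: "(D u + D s) \<bullet> g r \<le> C + 3 * \<Gamma> * norm (g r)" if r: "r \<in> {s..u}" for r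
  proof -
    have "norm ((D u - D r) + (D s - D r)) \<le> 3 * \<Gamma>"
      using dist_D[OF r] dist_D[of u] su norm_triangle_ineq[of "D u - D r" "D s - D r"]
        norm_triangle_ineq4[of "D u - D s" "D r - D s"]
      by (simp add: norm_minus_commute algebra_simps)
    then have "((D u - D r) + (D s - D r)) \<bullet> g r \<le> 3 * \<Gamma> * norm (g r)"
      by (intro order.trans[OF Cauchy_Schwarz_ineq2[THEN abs_le_D1]] mult_right_mono) auto
    moreover have "D r \<bullet> g r \<le> e + K * ((norm (D s))\<^sup>2 + 2 * \<Gamma>)"
      using mono[OF r D_le_1[OF r]] D_le_1[OF r] D_le_1[of s] su dist_D[OF r]
        mult_left_mono[OF sq_norm_le_of_dist_le K] by fastforce
    moreover have "(D u + D s) \<bullet> g r = 2 * (D r \<bullet> g r) + ((D u - D r) + (D s - D r)) \<bullet> g r"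
      by (simp add: algebra_simps)
    ultimately show ?thesis unfolding C_def by (smt (verit))
  qed
  have "(norm (D u))\<^sup>2 - (norm (D s))\<^sup>2 = (D u + D s) \<bullet> (D u - D s)"
    by (simp add: inner_add_left inner_add_right inner_diff_left inner_diff_right
        power2_norm_eq_inner inner_commute)
  also have "\<dots> = integral {s..u} (\<lambda>r. (D u + D s) \<bullet> g r)"
    using D[of u] su integral_component_eq[OF gi, of "D u + D s"] by (simp add: inner_commute)
  also have "\<dots> \<le> integral {s..u} (\<lambda>r. C + 3 * \<Gamma> * norm (g r))"
  proof (rule integral_le)
    show "(\<lambda>r. (D u + D s) \<bullet> g r) integrable_on {s..u}"
      using integrable_component[OF gi, of "D u + D s"] by (simp add: inner_commute)
    show "(\<lambda>r. C + 3 * \<Gamma> * norm (g r)) integrable_on {s..u}"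
      by (intro integrable_add integrable_on_mult_right ngi integrable_const_ivl)
  qed (use pointwise in auto)
  also have "\<dots> = (u - s) * C + 3 * \<Gamma>\<^sup>2"
    using su ngi by (subst integral_add)
      (auto simp: \<Gamma>_def power2_eq_square intro: integrable_on_mult_right)
  finally show ?thesis unfolding C_def by linarith
qed

lemma exp_weighted_sq_norm_step:
  fixes g D :: "real \<Rightarrow> 'a::euclidean_space"
  assumes K: "0 < K" and e: "0 \<le> e" and s: "0 \<le> s" and su: "s \<le> u"
    and gi: "g integrable_on {s..u}" and ngi: "(\<lambda>r. norm (g r)) integrable_on {s..u}"
    and D: "\<And>r. r \<in> {s..u} \<Longrightarrow> D r = D s + integral {s..r} g"
    and mono: "\<And>r. r \<in> {s..u} \<Longrightarrow> norm (D r) \<le> 1 \<Longrightarrow> D r \<bullet> g r \<le> e + K * (norm (D r))\<^sup>2"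
  defines "\<Gamma> \<equiv> integral {s..u} (\<lambda>r. norm (g r))"
  assumes D_s: "norm (D s) \<le> 1 / 2" and \<Gamma>_le: "\<Gamma> \<le> 1 / 2"
  shows "exp (- 2 * K * u) * ((norm (D u))\<^sup>2 + e / K)
           \<le> exp (- 2 * K * s) * ((norm (D s))\<^sup>2 + e / K) + \<Gamma> * (4 * K * (u - s) + 3 * \<Gamma>)"
proof -
  define X where "X = (norm (D s))\<^sup>2 + e / K"
  have X_ge_0: "0 \<le> X" unfolding X_def using e K by simp
  have \<Gamma>_ge_0: "0 \<le> \<Gamma>" unfolding \<Gamma>_def by (rule integral_nonneg[OF ngi]) auto
  have "X * (1 + 2 * K * (u - s)) + \<Gamma> * (4 * K * (u - s) + 3 * \<Gamma>)
      = (norm (D s))\<^sup>2 + (u - s) * (2 * (e + K * ((norm (D s))\<^sup>2 + 2 * \<Gamma>))) + 3 * \<Gamma>\<^sup>2 + e / K"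
    using K unfolding X_def by (simp add: field_simps power2_eq_square)
  then have "(norm (D u))\<^sup>2 + e / K \<le> X * (1 + 2 * K * (u - s)) + \<Gamma> * (4 * K * (u - s) + 3 * \<Gamma>)"
    using sq_norm_integral_step[OF less_imp_le[OF K] su gi ngi D mono D_s] \<Gamma>_le
    unfolding \<Gamma>_def by linarith
  then have "exp (- 2 * K * u) * ((norm (D u))\<^sup>2 + e / K)
      \<le> exp (- 2 * K * u) * (X * (1 + 2 * K * (u - s)) + \<Gamma> * (4 * K * (u - s) + 3 * \<Gamma>))"
    by (rule mult_left_mono) simp
  also have "\<dots> = (exp (- 2 * K * u) * (1 + 2 * K * (u - s))) * X
                     + exp (- 2 * K * u) * (\<Gamma> * (4 * K * (u - s) + 3 * \<Gamma>))"
    by (simp add: algebra_simps)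
  also have "\<dots> \<le> exp (- 2 * K * s) * X + \<Gamma> * (4 * K * (u - s) + 3 * \<Gamma>)"
  proof (rule add_mono)
    have "exp (- 2 * K * u) * (1 + 2 * K * (u - s)) \<le> exp (- 2 * K * u) * exp (2 * K * (u - s))"
      by (rule mult_left_mono) (auto intro: exp_ge_add_one_self)
    also have "\<dots> = exp (- 2 * K * s)" by (simp add: exp_add[symmetric] algebra_simps)
    finally show "(exp (- 2 * K * u) * (1 + 2 * K * (u - s))) * X \<le> exp (- 2 * K * s) * X"
      by (rule mult_right_mono[OF _ X_ge_0])
    show "exp (- 2 * K * u) * (\<Gamma> * (4 * K * (u - s) + 3 * \<Gamma>)) \<le> \<Gamma> * (4 * K * (u - s) + 3 * \<Gamma>)"
      using K s su \<Gamma>_ge_0 by (intro mult_left_le_one_le) auto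
  qed
  finally show ?thesis unfolding X_def .
qed

lemma sq_norm_stability_approx:
  fixes g D :: "real \<Rightarrow> 'a::euclidean_space"
  assumes t: "0 \<le> t" and K: "0 < K" and e: "0 \<le> e" and \<eta>: "0 < \<eta>"
    and gi: "g integrable_on {0..t}" and ngi: "(\<lambda>r. norm (g r)) integrable_on {0..t}"
    and D: "\<And>s. s \<in> {0..t} \<Longrightarrow> D s = D 0 + integral {0..s} g"
    and mono: "\<And>r. r \<in> {0..t} \<Longrightarrow> norm (D r) \<le> 1 \<Longrightarrow> D r \<bullet> g r \<le> e + K * (norm (D r))\<^sup>2"
  defines "B \<equiv> exp (2 * K * t) * ((norm (D 0))\<^sup>2 + e / K + \<eta> * integral {0..t} (\<lambda>r. norm (g r)))"
  assumes small: "B \<le> 1 / 4"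
  shows "(norm (D t))\<^sup>2 \<le> B"
proof -
  define G where "G s = integral {0..s} (\<lambda>r. norm (g r))" for s
  define \<Phi> where "\<Phi> s = exp (- 2 * K * s) * ((norm (D s))\<^sup>2 + e / K)" for s
  have gi_sub: "g integrable_on {s..u}" and ngi_sub: "(\<lambda>r. norm (g r)) integrable_on {s..u}"
    if "0 \<le> s" "u \<le> t" for s u
    using that
    by (auto intro: integrable_subinterval_real[OF gi] integrable_subinterval_real[OF ngi])
  have G_diff: "integral {s..u} (\<lambda>r. norm (g r)) = G u - G s" if "0 \<le> s" "s \<le> u" "u \<le> t" for s u
    using Henstock_Kurzweil_Integration.integral_combine[of 0 s u "\<lambda>r. norm (g r)"]
      ngi_sub[of 0 u] that
    unfolding G_def by auto
  have G_mono: "G s \<le> G u" if "0 \<le> s" "s \<le> u" "u \<le> t" for s u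
    using G_diff[OF that] integral_nonneg[OF ngi_sub[of s u]] that by auto
  obtain d where d: "0 < d" and \<Gamma>_small: "\<And>s u. 0 \<le> s \<Longrightarrow> s \<le> u \<Longrightarrow> u \<le> t \<Longrightarrow> u - s < d \<Longrightarrow>
      integral {s..u} (\<lambda>r. norm (g r)) < min (1 / 2) (\<eta> / 6)"
    using integral_Icc_increments_small[OF ngi, of "min (1 / 2) (\<eta> / 6)"] \<eta> by auto
  \<comment> \<open>\<open>D\<close> is only an indefinite integral, so instead of differentiating \<open>\<Phi>\<close> we
    control its growth over short steps, on which \<open>D\<close> stays in the unit ball where the
    monotonicity bound is available.\<close>
  have "\<Phi> t \<le> \<Phi> 0 + \<eta> * G t"
  proof (rule real_interval_induct_small_steps[OF t, of "min d (\<eta> / (8 * K))"])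
    show "0 < min d (\<eta> / (8 * K))" using d \<eta> K by simp
    show "\<Phi> 0 \<le> \<Phi> 0 + \<eta> * G 0" by (simp add: G_def)
    fix s u assume s: "0 \<le> s" and su: "s \<le> u" and u: "u \<le> t" and step: "u - s < min d (\<eta> / (8 * K))"
      and IH: "\<Phi> s \<le> \<Phi> 0 + \<eta> * G s"
    define \<Gamma> where "\<Gamma> = integral {s..u} (\<lambda>r. norm (g r))"
    have \<Gamma>: "0 \<le> \<Gamma>" "\<Gamma> \<le> 1 / 2" "3 * \<Gamma> \<le> \<eta> / 2"
      using G_mono[OF s su u] G_diff[OF s su u] \<Gamma>_small[OF s su u] step by (auto simp: \<Gamma>_def)
    have "(norm (D s))\<^sup>2 + e / K \<le> exp (2 * K * s) * (\<Phi> 0 + \<eta> * G s)"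
      using IH by (simp add: \<Phi>_def exp_minus field_simps)
    also have "\<dots> \<le> B"
      unfolding B_def using K s su u \<eta> e G_mono[of 0 s] G_mono[of s t]
      by (intro mult_mono add_left_mono mult_left_mono) (auto simp: \<Phi>_def G_def)
    finally have "(norm (D s))\<^sup>2 \<le> (1 / 2)\<^sup>2"
      using small divide_nonneg_pos[OF e K] by (simp add: power2_eq_square)
    then have D_s: "norm (D s) \<le> 1 / 2" by (rule power2_le_imp_le) simp
    have D_shift: "D r = D s + integral {s..r} g" if "r \<in> {s..u}" for r
      using Henstock_Kurzweil_Integration.integral_combine[of 0 s r g] gi_sub[of 0 r] D[of r]
        D[of s] that s u
      by (auto simp: algebra_simps)
    have "\<Phi> u \<le> \<Phi> s + \<Gamma> * (4 * K * (u - s) + 3 * \<Gamma>)"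
      unfolding \<Phi>_def \<Gamma>_def using s su u mono D_s \<Gamma>(2)
      by (intro exp_weighted_sq_norm_step[OF K e s su gi_sub ngi_sub D_shift]) (auto simp: \<Gamma>_def)
    also have "\<dots> \<le> \<Phi> s + \<Gamma> * \<eta>"
      using step K \<Gamma> by (intro add_left_mono mult_left_mono) (auto simp: field_simps)
    finally show "\<Phi> u \<le> \<Phi> 0 + \<eta> * G u" using IH G_diff[OF s su u] by (simp add: \<Gamma>_def algebra_simps)
  qed
  then have "(norm (D t))\<^sup>2 + e / K \<le> B"
    by (simp add: \<Phi>_def B_def G_def exp_minus field_simps)
  then show ?thesis using e K by (smt (verit) divide_nonneg_pos)
qed

lemma sq_norm_stability:
  fixes g D :: "real \<Rightarrow> 'a::euclidean_space"
  assumes t: "0 \<le> t" and K: "0 < K" and e: "0 \<le> e"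
    and gi: "g integrable_on {0..t}" and ngi: "(\<lambda>r. norm (g r)) integrable_on {0..t}"
    and D: "\<And>s. s \<in> {0..t} \<Longrightarrow> D s = D 0 + integral {0..s} g"
    and mono: "\<And>r. r \<in> {0..t} \<Longrightarrow> norm (D r) \<le> 1 \<Longrightarrow> D r \<bullet> g r \<le> e + K * (norm (D r))\<^sup>2"
    and small: "exp (2 * K * t) * ((norm (D 0))\<^sup>2 + e / K) < 1 / 4"
  shows "(norm (D t))\<^sup>2 \<le> exp (2 * K * t) * ((norm (D 0))\<^sup>2 + e / K)"
proof -
  define B where
    "B \<eta> = exp (2 * K * t) * ((norm (D 0))\<^sup>2 + e / K + \<eta> * integral {0..t} (\<lambda>r. norm (g r)))" for \<eta>
  have lim: "(B \<longlongrightarrow> B 0) (at_right 0)" unfolding B_def by (intro tendsto_intros)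
  have "B 0 < 1 / 4" using small by (simp add: B_def)
  then have "eventually (\<lambda>\<eta>. B \<eta> < 1 / 4) (at_right 0)" by (rule order_tendstoD(2)[OF lim])
  then have "eventually (\<lambda>\<eta>. (norm (D t))\<^sup>2 \<le> B \<eta>) (at_right 0)"
    using eventually_at_right_less[of 0]
  proof eventually_elim
    case (elim \<eta>)
    then have "B \<eta> \<le> 1 / 4" by simp
    then show ?case
      unfolding B_def using sq_norm_stability_approx[OF t K e elim(2) gi ngi D mono] by simp
  qed
  from tendsto_lowerbound[OF lim this] show ?thesis by (simp add: B_def)
qed

lemma set_integrable_Icc_imp_integrable_on:
  fixes f :: "real \<Rightarrow> 'a::euclidean_space"
  assumes f: "set_integrable lborel {0..t} f"
  shows "f integrable_on {0..t}" "(\<lambda>r. norm (f r)) integrable_on {0..t}"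
    and "\<And>s. s \<in> {0..t} \<Longrightarrow> (LINT r:{0..s}|lborel. f r) = integral {0..s} f"
proof -
  show "f integrable_on {0..t}" by (rule set_borel_integral_eq_integral(1)[OF f])
  show "(\<lambda>r. norm (f r)) integrable_on {0..t}"
    by (rule set_borel_integral_eq_integral(1)[OF set_integrable_norm[OF f]])
  fix s assume "s \<in> {0..t}"
  then have "set_integrable lborel {0..s} f" by (intro set_integrable_subset[OF f]) auto
  then show "(LINT r:{0..s}|lborel. f r) = integral {0..s} f"
    by (rule set_borel_integral_eq_integral(2))
qed

lemma integral_equation_solution_bounded:
  fixes y z :: "real \<Rightarrow> 'a::euclidean_space" and v :: "'a \<Rightarrow> 'a"
  assumes vi: "set_integrable lborel {0..t} (\<lambda>r. v (y r))"
    and y: "\<And>s. s \<in> {0..t} \<Longrightarrow> y s = x + (LINT r:{0..s}|lborel. v (y r)) + z s"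
    and z: "\<And>s. s \<in> {0..t} \<Longrightarrow> norm (z s) \<le> Bz"
  shows "\<exists>R. \<forall>s\<in>{0..t}. norm (y s) \<le> R"
proof -
  note vi = set_integrable_Icc_imp_integrable_on[OF vi]
  have "norm (y s) \<le> norm x + integral {0..t} (\<lambda>r. norm (v (y r))) + Bz" if s: "s \<in> {0..t}" for s
    using y[OF s] vi(3)[OF s] z[OF s] norm_integral_le_integral_norm_Icc[OF vi(1,2) s]
      norm_triangle_ineq[of "x + integral {0..s} (\<lambda>r. v (y r))" "z s"]
      norm_triangle_ineq[of x "integral {0..s} (\<lambda>r. v (y r))"] by auto
  then show ?thesis by blast
qed

lemma integral_equation_solutions_sq_dist_le:
  fixes y y' z :: "real \<Rightarrow> 'a::euclidean_space" and v v' :: "'a \<Rightarrow> 'a"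
  assumes t: "0 \<le> t"
    and vi: "set_integrable lborel {0..t} (\<lambda>r. v (y r))"
    and y: "\<And>s. s \<in> {0..t} \<Longrightarrow> y s = x + (LINT r:{0..s}|lborel. v (y r)) + z s"
    and vi': "set_integrable lborel {0..t} (\<lambda>r. v' (y' r))"
    and y': "\<And>s. s \<in> {0..t} \<Longrightarrow> y' s = x' + (LINT r:{0..s}|lborel. v' (y' r)) + z s"
    and y_le: "\<And>s. s \<in> {0..t} \<Longrightarrow> norm (y s) + 1 \<le> R"
    and K: "0 < K"
    and mono: "\<And>u w. max (norm u) (norm w) \<le> R \<Longrightarrow> (u - w) \<bullet> (v u - v w) \<le> K * (norm (u - w))\<^sup>2"
    and \<epsilon>: "0 \<le> \<epsilon>" and close: "\<And>u. norm u \<le> R \<Longrightarrow> norm (v' u - v u) \<le> \<epsilon>"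
    and small: "exp (2 * K * t) * ((norm (x' - x))\<^sup>2 + \<epsilon> / K) < 1 / 4"
  shows "(norm (y' t - y t))\<^sup>2 \<le> exp (2 * K * t) * ((norm (x' - x))\<^sup>2 + \<epsilon> / K)"
proof -
  define g where "g r = v' (y' r) - v (y r)" for r
  define D where "D s = y' s - y s" for s
  have "set_integrable lborel {0..t} g" unfolding g_def using vi' vi by (rule set_integral_diff)
  note gi = set_integrable_Icc_imp_integrable_on[OF this]
  note vi = set_integrable_Icc_imp_integrable_on[OF vi]
    and vi' = set_integrable_Icc_imp_integrable_on[OF vi']
  have D_0: "D 0 = x' - x" using y[of 0] y'[of 0] vi(3)[of 0] vi'(3)[of 0] t by (simp add: D_def)
  have D: "D s = D 0 + integral {0..s} g" if s: "s \<in> {0..t}" for s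
  proof -
    have "integral {0..s} g = integral {0..s} (\<lambda>r. v' (y' r)) - integral {0..s} (\<lambda>r. v (y r))"
      unfolding g_def by (rule integral_diff)
        (use vi vi' s in \<open>auto intro: integrable_subinterval_real\<close>)
    then show ?thesis using y[OF s] y'[OF s] vi(3)[OF s] vi'(3)[OF s] D_0 by (simp add: D_def)
  qed
  have "D r \<bullet> g r \<le> \<epsilon> + K * (norm (D r))\<^sup>2" if r: "r \<in> {0..t}" and D_r: "norm (D r) \<le> 1" for r
  proof -
    have y_r: "norm (y r) \<le> R" using y_le[OF r] by simp
    have y'_r: "norm (y' r) \<le> R"
      using D_r y_le[OF r] norm_triangle_ineq[of "y r" "D r"] by (simp add: D_def)
    have "D r \<bullet> (v' (y' r) - v (y' r)) \<le> norm (D r) * norm (v' (y' r) - v (y' r))"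
      by (rule Cauchy_Schwarz_ineq2[THEN abs_le_D1])
    also have "\<dots> \<le> 1 * \<epsilon>" using D_r close[OF y'_r] by (intro mult_mono) auto
    finally have "D r \<bullet> (v' (y' r) - v (y' r)) \<le> \<epsilon>" by simp
    moreover have "D r \<bullet> (v (y' r) - v (y r)) \<le> K * (norm (D r))\<^sup>2"
      using mono[of "y' r" "y r"] y'_r y_r by (simp add: D_def)
    moreover have "D r \<bullet> g r = D r \<bullet> (v' (y' r) - v (y' r)) + D r \<bullet> (v (y' r) - v (y r))"
      by (simp add: g_def inner_diff_right)
    ultimately show ?thesis by linarith
  qed
  then have "(norm (D t))\<^sup>2 \<le> exp (2 * K * t) * ((norm (D 0))\<^sup>2 + \<epsilon> / K)"
    by (intro sq_norm_stability[OF t K \<epsilon> gi(1,2) D]) (use small D_0 in auto)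
  then show ?thesis unfolding D_0 by (simp add: D_def)
qed

definition one_sided_lipschitz_on_balls :: "('a::real_inner \<Rightarrow> 'a) \<Rightarrow> bool" where
  "one_sided_lipschitz_on_balls v \<longleftrightarrow> (\<forall>n::nat. n \<ge> 1 \<longrightarrow> (\<exists>K>0. \<forall>u w.
     max (norm u) (norm w) \<le> real n \<longrightarrow> (u - w) \<bullet> (v u - v w) \<le> K * (norm (u - w))\<^sup>2))"

definition tendsto_uniformly_on_balls ::
    "(nat \<Rightarrow> 'a::real_normed_vector \<Rightarrow> 'b::real_normed_vector) \<Rightarrow> ('a \<Rightarrow> 'b) \<Rightarrow> bool" where
  "tendsto_uniformly_on_balls vs v \<longleftrightarrow> (\<forall>n::nat. n \<ge> 1 \<longrightarrow> (\<forall>\<epsilon>>0.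
     eventually (\<lambda>k. \<forall>u. norm u \<le> real n \<longrightarrow> norm (vs k u - v u) \<le> \<epsilon>) sequentially))"

lemma tendsto_uniformly_on_balls_subseq:
  assumes "tendsto_uniformly_on_balls vs v" and "strict_mono r"
  shows "tendsto_uniformly_on_balls (\<lambda>j. vs (r j)) v"
  using assms eventually_subseq[OF assms(2)] unfolding tendsto_uniformly_on_balls_def by blast

lemma integral_equation_solutions_tendsto:
  fixes z y :: "real \<Rightarrow> 'a::euclidean_space" and ys :: "nat \<Rightarrow> real \<Rightarrow> 'a"
    and v :: "'a \<Rightarrow> 'a" and vs :: "nat \<Rightarrow> 'a \<Rightarrow> 'a"
  assumes t: "0 \<le> t" and z: "\<And>s. s \<in> {0..t} \<Longrightarrow> norm (z s) \<le> Bz"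
    and vi: "set_integrable lborel {0..t} (\<lambda>r. v (y r))"
    and y: "\<And>s. s \<in> {0..t} \<Longrightarrow> y s = x + (LINT r:{0..s}|lborel. v (y r)) + z s"
    and vsi: "\<And>k. set_integrable lborel {0..t} (\<lambda>r. vs k (ys k r))"
    and ys: "\<And>k s. s \<in> {0..t} \<Longrightarrow> ys k s = xs k + (LINT r:{0..s}|lborel. vs k (ys k r)) + z s"
    and mono: "one_sided_lipschitz_on_balls v" and conv: "tendsto_uniformly_on_balls vs v"
    and xs: "xs \<longlonglongrightarrow> x"
  shows "(\<lambda>k. ys k t) \<longlonglongrightarrow> y t"
proof -
  obtain R where R: "\<And>s. s \<in> {0..t} \<Longrightarrow> norm (y s) \<le> R"
    using integral_equation_solution_bounded[OF vi y z] by blast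
  define n where "n = nat \<lceil>R\<rceil> + 1"
  have n: "n \<ge> 1" by (simp add: n_def)
  have y_le: "norm (y s) + 1 \<le> real n" if "s \<in> {0..t}" for s
    using R[OF that] real_nat_ceiling_ge[of R] by (simp add: n_def)
  obtain K where K: "0 < K" and K_mono: "\<And>u w. max (norm u) (norm w) \<le> real n \<Longrightarrow>
      (u - w) \<bullet> (v u - v w) \<le> K * (norm (u - w))\<^sup>2"
    using mono n unfolding one_sided_lipschitz_on_balls_def by blast
  define E where "E = exp (2 * K * t)"
  have lim_e: "((\<lambda>\<epsilon>. E * \<epsilon> / K) \<longlongrightarrow> 0) (at_right 0)"
    using K by (auto intro!: tendsto_eq_intros)
  have "(\<lambda>k. (norm (ys k t - y t))\<^sup>2) \<longlonglongrightarrow> 0"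
  proof (rule tendsto_zero_if_eventually_approx[OF _ lim_e])
    have "eventually (\<lambda>\<epsilon>. E * \<epsilon> / K < 1 / 8) (at_right 0)"
      using order_tendstoD(2)[OF lim_e, of "1 / 8"] by simp
    then show "eventually (\<lambda>\<epsilon>. \<forall>\<delta>>0. eventually
        (\<lambda>k. \<bar>(norm (ys k t - y t))\<^sup>2\<bar> \<le> E * \<epsilon> / K + \<delta>) sequentially) (at_right 0)"
      using eventually_at_right_less[of 0]
    proof eventually_elim
      case \<epsilon>: (elim \<epsilon>)
      show ?case
      proof (intro allI impI)
        fix \<delta> :: real assume \<delta>: "0 < \<delta>"
        have "(\<lambda>k. E * (norm (xs k - x))\<^sup>2) \<longlonglongrightarrow> E * (norm (x - x))\<^sup>2" by (intro tendsto_intros xs)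
        then have "eventually (\<lambda>k. E * (norm (xs k - x))\<^sup>2 < min \<delta> (1 / 8)) sequentially"
          using \<delta> by (intro order_tendstoD(2)) auto
        moreover have "eventually (\<lambda>k. \<forall>u. norm u \<le> real n \<longrightarrow> norm (vs k u - v u) \<le> \<epsilon>) sequentially"
          using conv n \<epsilon>(2) unfolding tendsto_uniformly_on_balls_def by blast
        ultimately show "eventually (\<lambda>k. \<bar>(norm (ys k t - y t))\<^sup>2\<bar> \<le> E * \<epsilon> / K + \<delta>) sequentially"
        proof eventually_elim
          case (elim k)
          have split: "E * ((norm (xs k - x))\<^sup>2 + \<epsilon> / K) = E * (norm (xs k - x))\<^sup>2 + E * \<epsilon> / K"
            by (simp add: algebra_simps)
          have "(norm (ys k t - y t))\<^sup>2 \<le> E * ((norm (xs k - x))\<^sup>2 + \<epsilon> / K)"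
            using split elim \<epsilon> unfolding E_def
            by (intro integral_equation_solutions_sq_dist_le[OF t vi y vsi[of k] ys[where k=k]
                  y_le K K_mono]) auto
          then show ?case using split elim(1) by simp
        qed
      qed
    qed
  qed simp
  from tendsto_real_sqrt[OF this] have "(\<lambda>k. norm (ys k t - y t)) \<longlonglongrightarrow> 0" by simp
  then show ?thesis by (rule LIM_zero_cancel[OF tendsto_norm_zero_cancel])
qed

section \<open>Pathwise convergence of the solutions\<close>

lemma cadlag_locally_bounded:
  fixes z :: "real \<Rightarrow> 'a::real_normed_vector"
  assumes right: "continuous (at_right s) z"
    and left: "0 < s \<Longrightarrow> \<exists>l. (z \<longlongrightarrow> l) (at_left s)"
  shows "\<exists>d>0. \<exists>B. \<forall>r. 0 \<le> r \<longrightarrow> \<bar>r - s\<bar> < d \<longrightarrow> norm (z r) \<le> B"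
proof -
  have "eventually (\<lambda>r. dist (z r) (z s) < 1) (at_right s)"
    using right by (intro tendstoD) (simp_all add: continuous_within)
  then obtain b1 where b1: "s < b1" "\<And>r. s < r \<Longrightarrow> r < b1 \<Longrightarrow> dist (z r) (z s) < 1"
    unfolding eventually_at_right_field by blast
  obtain b2 l where b2: "b2 < s" "\<And>r. b2 < r \<Longrightarrow> r < s \<Longrightarrow> 0 \<le> r \<Longrightarrow> dist (z r) l < 1"
  proof (cases "0 < s")
    case True
    then obtain l where "(z \<longlongrightarrow> l) (at_left s)" using left by blast
    then have "eventually (\<lambda>r. dist (z r) l < 1) (at_left s)" by (rule tendstoD) simp
    then show ?thesis using that unfolding eventually_at_left_field by blast
  next
    case False
    show ?thesis by (rule that[of "s - 1" 0]) (use False in auto)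
  qed
  define B where "B = max (norm (z s)) (norm l) + 1"
  have "norm (z r) \<le> B" if r: "0 \<le> r" "\<bar>r - s\<bar> < min (b1 - s) (s - b2)" for r
  proof -
    consider "r = s" | "dist (z r) (z s) < 1" | "dist (z r) l < 1"
      using b1 b2 r by (cases r s rule: linorder_cases) auto
    then show ?thesis
      unfolding B_def by cases
        (use norm_triangle_ineq2[of "z r" "z s"] norm_triangle_ineq2[of "z r" l] in
          \<open>auto simp: dist_norm\<close>)
  qed
  moreover have "0 < min (b1 - s) (s - b2)" using b1 b2 by simp
  ultimately show ?thesis by blast
qed

lemma cadlag_bounded_on_Icc:
  fixes z :: "real \<Rightarrow> 'a::real_normed_vector"
  assumes right: "\<And>s. 0 \<le> s \<Longrightarrow> continuous (at_right s) z"
    and left: "\<And>s. 0 < s \<Longrightarrow> \<exists>l. (z \<longlongrightarrow> l) (at_left s)"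
  shows "\<exists>B. \<forall>s\<in>{0..T}. norm (z s) \<le> B"
proof -
  have "\<forall>s\<in>{0..T}. \<exists>d>0. \<exists>B. \<forall>r. 0 \<le> r \<longrightarrow> \<bar>r - s\<bar> < d \<longrightarrow> norm (z r) \<le> B"
    using cadlag_locally_bounded[OF right left] by auto
  then obtain d B where dB: "\<And>s. s \<in> {0..T} \<Longrightarrow>
      0 < d s \<and> (\<forall>r. 0 \<le> r \<longrightarrow> \<bar>r - s\<bar> < d s \<longrightarrow> norm (z r) \<le> B s)"
    by metis
  have cover: "{0..T} \<subseteq> (\<Union>s\<in>{0..T}. ball s (d s))" using dB by force
  obtain C where C: "C \<subseteq> {0..T}" "finite C" "{0..T} \<subseteq> (\<Union>c\<in>C. ball c (d c))"
    using compactE_image[OF compact_Icc _ cover] by blast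
  have "norm (z s) \<le> (\<Sum>c\<in>C. \<bar>B c\<bar>)" if s: "s \<in> {0..T}" for s
  proof -
    obtain c where c: "c \<in> C" "s \<in> ball c (d c)" using C s by blast
    then have "norm (z s) \<le> B c" using dB[of c] C(1) s by (auto simp: dist_real_def)
    also have "\<dots> \<le> \<bar>B c\<bar>" by simp
    also have "\<dots> \<le> (\<Sum>c\<in>C. \<bar>B c\<bar>)" using c C by (intro member_le_sum) auto
    finally show ?thesis .
  qed
  then show ?thesis by blast
qed

lemma pure_jump_levy_paths_bounded:
  assumes "pure_jump_levy M \<nu> Z" and "\<omega> \<in> space M"
  shows "\<exists>B. \<forall>s\<in>{0..T}. norm (Z s \<omega>) \<le> B"
  using assms by (intro cadlag_bounded_on_Icc) (auto simp: pure_jump_levy_def)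

lemma sde_solutions_tendsto:
  fixes Z :: "real \<Rightarrow> 'w \<Rightarrow> 'a::euclidean_space" and b :: "'a \<Rightarrow> 'a measure \<Rightarrow> 'a"
    and Y :: "real \<Rightarrow> 'w \<Rightarrow> 'a" and Ys :: "nat \<Rightarrow> real \<Rightarrow> 'w \<Rightarrow> 'a"
  assumes levy: "pure_jump_levy M \<nu> Z"
    and Y: "sde_solution M Z b \<mu> x Y" and Ys: "\<And>k. sde_solution M Z b (\<mu>s k) (xs k) (Ys k)"
    and mono: "one_sided_lipschitz_on_balls (\<lambda>u. b u \<mu>)"
    and conv: "tendsto_uniformly_on_balls (\<lambda>k u. b u (\<mu>s k)) (\<lambda>u. b u \<mu>)"
    and xs: "xs \<longlonglongrightarrow> x" and t: "0 \<le> t" and \<omega>: "\<omega> \<in> space M"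
  shows "(\<lambda>k. Ys k t \<omega>) \<longlonglongrightarrow> Y t \<omega>"
proof -
  obtain Bz where "\<forall>s\<in>{0..t}. norm (Z s \<omega>) \<le> Bz"
    using pure_jump_levy_paths_bounded[OF levy \<omega>] by blast
  then show ?thesis
    using Y Ys \<omega> t mono conv xs unfolding sde_solution_def
    by (intro integral_equation_solutions_tendsto[where z = "\<lambda>s. Z s \<omega>" and v = "\<lambda>u. b u \<mu>"
          and vs = "\<lambda>k u. b u (\<mu>s k)"]) auto
qed

section \<open>Convergence of the transition laws, uniformly on balls\<close>

lemma eventually_uniformly_on_compact_if_subseq_tendsto:
  fixes F :: "nat \<Rightarrow> 'a::metric_space \<Rightarrow> real"
  assumes S: "compact S" and \<delta>: "0 < \<delta>"
    and seq: "\<And>r xs x. strict_mono r \<Longrightarrow> (\<forall>j. xs j \<in> S) \<Longrightarrow> xs \<longlonglongrightarrow> x \<Longrightarrow> (\<lambda>j. F (r j) (xs j)) \<longlonglongrightarrow> 0"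
  shows "eventually (\<lambda>k. \<forall>x\<in>S. \<bar>F k x\<bar> \<le> \<delta>) sequentially"
proof (rule ccontr)
  assume "\<not> ?thesis"
  from not_eventually_sequentiallyD[OF this] obtain r :: "nat \<Rightarrow> nat"
    where r: "strict_mono r" and "\<forall>j. \<exists>x\<in>S. \<delta> < \<bar>F (r j) x\<bar>"
    by (auto simp: not_le)
  then obtain xs where xs: "\<And>j. xs j \<in> S" and far: "\<And>j. \<delta> < \<bar>F (r j) (xs j)\<bar>"
    by metis
  obtain l r' where r': "strict_mono r'" and lim: "(xs \<circ> r') \<longlonglongrightarrow> l"
    using seq_compactE[OF compact_imp_seq_compact[OF S]] xs by metis
  have "(\<lambda>j. F ((r \<circ> r') j) ((xs \<circ> r') j)) \<longlonglongrightarrow> 0"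
    using xs by (intro seq[OF strict_mono_o[OF r r'] _ lim]) simp
  from tendstoD[OF this \<delta>] obtain j where "\<bar>F (r (r' j)) (xs (r' j))\<bar> < \<delta>"
    by (auto simp: eventually_sequentially)
  with far[of "r' j"] show False by simp
qed

lemma integral_bounded_continuous_tendsto:
  fixes X :: "nat \<Rightarrow> 'w \<Rightarrow> 'a::t2_space" and f :: "'a \<Rightarrow> real"
  assumes M: "finite_measure M"
    and X: "\<And>j. X j \<in> M \<rightarrow>\<^sub>M borel" and X0: "X0 \<in> M \<rightarrow>\<^sub>M borel"
    and f: "continuous_on UNIV f" and f_le: "\<And>x. \<bar>f x\<bar> \<le> B"
    and lim: "\<And>\<omega>. \<omega> \<in> space M \<Longrightarrow> (\<lambda>j. X j \<omega>) \<longlonglongrightarrow> X0 \<omega>"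
  shows "(\<lambda>j. \<integral>\<omega>. f (X j \<omega>) \<partial>M) \<longlonglongrightarrow> (\<integral>\<omega>. f (X0 \<omega>) \<partial>M)"
proof (rule integral_dominated_convergence[where w = "\<lambda>_. B"])
  interpret finite_measure M by (rule M)
  have [measurable]: "f \<in> borel_measurable borel" by (rule borel_measurable_continuous_onI[OF f])
  show "(\<lambda>\<omega>. f (X0 \<omega>)) \<in> borel_measurable M" "(\<lambda>\<omega>. f (X j \<omega>)) \<in> borel_measurable M" for j
    using X X0 by measurable
  show "integrable M (\<lambda>_. B)" by simp
  show "AE \<omega> in M. norm (f (X j \<omega>)) \<le> B" for j using f_le by simp
  show "AE \<omega> in M. (\<lambda>j. f (X j \<omega>)) \<longlonglongrightarrow> f (X0 \<omega>)"
    using f lim by (intro AE_I2 isCont_tendsto_compose[of _ f])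
      (auto simp: continuous_on_eq_continuous_at)
qed

lemma trans_law_integral_tendsto_uniformly:
  fixes Z :: "real \<Rightarrow> 'w \<Rightarrow> 'a::euclidean_space" and b :: "'a \<Rightarrow> 'a measure \<Rightarrow> 'a"
    and Y :: "'a \<Rightarrow> real \<Rightarrow> 'w \<Rightarrow> 'a" and Ys :: "nat \<Rightarrow> 'a \<Rightarrow> real \<Rightarrow> 'w \<Rightarrow> 'a"
    and f :: "'a \<Rightarrow> real"
  assumes levy: "pure_jump_levy M \<nu> Z"
    and Y: "\<And>x. sde_solution M Z b \<mu> x (Y x)" and Ys: "\<And>k x. sde_solution M Z b (\<mu>s k) x (Ys k x)"
    and mono: "one_sided_lipschitz_on_balls (\<lambda>u. b u \<mu>)"
    and conv: "tendsto_uniformly_on_balls (\<lambda>k u. b u (\<mu>s k)) (\<lambda>u. b u \<mu>)"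
    and f: "continuous_on UNIV f" and f_le: "\<And>x. \<bar>f x\<bar> \<le> B" and t: "0 \<le> t" and \<delta>: "0 < \<delta>"
  shows "eventually (\<lambda>k. \<forall>x\<in>cball 0 R.
           \<bar>(\<integral>y. f y \<partial>trans_law M (Ys k) x t) - (\<integral>y. f y \<partial>trans_law M Y x t)\<bar> \<le> \<delta>) sequentially"
proof (rule eventually_uniformly_on_compact_if_subseq_tendsto[OF compact_cball \<delta>, where
      F = "\<lambda>k x. (\<integral>y. f y \<partial>trans_law M (Ys k) x t) - (\<integral>y. f y \<partial>trans_law M Y x t)"])
  have M: "finite_measure M"
    using levy by (auto simp: pure_jump_levy_def intro: prob_space.finite_measure)
  have Y_meas: "Y x t \<in> borel_measurable M" and Ys_meas: "Ys k x t \<in> borel_measurable M" for k x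
    using Y Ys t by (auto simp: sde_solution_def)
  have trans_law_integral: "(\<integral>y. f y \<partial>trans_law M X x t) = (\<integral>\<omega>. f (X x t \<omega>) \<partial>M)"
    if "X x t \<in> borel_measurable M" for X x
    unfolding trans_law_def using that
    by (intro integral_distr borel_measurable_continuous_onI[OF f])
  fix r :: "nat \<Rightarrow> nat" and xs :: "nat \<Rightarrow> 'a" and x assume r: "strict_mono r"
    and "\<forall>j. xs j \<in> cball 0 R" and xs: "xs \<longlonglongrightarrow> x"
  have "(\<lambda>j. \<integral>\<omega>. f (Ys (r j) (xs j) t \<omega>) \<partial>M) \<longlonglongrightarrow> (\<integral>\<omega>. f (Y x t \<omega>) \<partial>M)"
  proof (rule integral_bounded_continuous_tendsto[OF M Ys_meas Y_meas f f_le])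
    fix \<omega> assume "\<omega> \<in> space M"
    then show "(\<lambda>j. Ys (r j) (xs j) t \<omega>) \<longlonglongrightarrow> Y x t \<omega>"
      using Y Ys mono tendsto_uniformly_on_balls_subseq[OF conv r] xs t
      by (intro sde_solutions_tendsto[OF levy, where \<mu>s = "\<lambda>j. \<mu>s (r j)"
            and Ys = "\<lambda>j. Ys (r j) (xs j)"]) auto
  qed
  moreover have "(\<lambda>j. \<integral>\<omega>. f (Y (xs j) t \<omega>) \<partial>M) \<longlonglongrightarrow> (\<integral>\<omega>. f (Y x t \<omega>) \<partial>M)"
  proof (rule integral_bounded_continuous_tendsto[OF M Y_meas Y_meas f f_le])
    fix \<omega> assume "\<omega> \<in> space M"
    moreover have "tendsto_uniformly_on_balls (\<lambda>_ u. b u \<mu>) (\<lambda>u. b u \<mu>)"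
      by (simp add: tendsto_uniformly_on_balls_def)
    ultimately show "(\<lambda>j. Y (xs j) t \<omega>) \<longlonglongrightarrow> Y x t \<omega>"
      using Y mono xs t
      by (intro sde_solutions_tendsto[OF levy, where \<mu>s = "\<lambda>_. \<mu>" and Ys = "\<lambda>j. Y (xs j)"]) auto
  qed
  ultimately show "(\<lambda>j. (\<integral>y. f y \<partial>trans_law M (Ys (r j)) (xs j) t)
      - (\<integral>y. f y \<partial>trans_law M Y (xs j) t)) \<longlonglongrightarrow> 0"
    using tendsto_diff by (fastforce simp: trans_law_integral Y_meas Ys_meas)
qed

section \<open>Invariant measures\<close>

lemma trans_law_measurable:
  fixes Y :: "'a::euclidean_space \<Rightarrow> real \<Rightarrow> 'w \<Rightarrow> 'a"
  assumes M: "prob_space M" and Y: "\<And>x. Y x t \<in> borel_measurable M"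
    and Feller: "Cb_Feller M Y" and t: "0 \<le> t"
  shows "(\<lambda>x. trans_law M Y x t) \<in> borel \<rightarrow>\<^sub>M prob_algebra borel"
proof (rule measurable_prob_algebraI)
  have prob: "prob_space (trans_law M Y x t)" for x
    unfolding trans_law_def by (rule prob_space.prob_space_distr[OF M Y])
  then show "prob_space (trans_law M Y x t)" for x .
  show "(\<lambda>x. trans_law M Y x t) \<in> borel \<rightarrow>\<^sub>M subprob_algebra borel"
  proof (rule measurable_subprob_algebra)
    show "subprob_space (trans_law M Y x t)" for x by (rule prob_space_imp_subprob_space[OF prob])
    show "sets (trans_law M Y x t) = sets borel" for x by (simp add: trans_law_def)
    fix A :: "'a set" assume "A \<in> sets borel"
    then have "(\<lambda>x. measure (trans_law M Y x t) A) \<in> borel_measurable borel"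
      using Feller t unfolding Cb_Feller_def by blast
    then show "(\<lambda>x. emeasure (trans_law M Y x t) A) \<in> borel_measurable borel"
      by (simp add: finite_measure.emeasure_eq_measure[OF prob_space.finite_measure[OF prob]])
  qed
qed

lemma bind_trans_law_invariant_pm:
  fixes Y :: "'a::euclidean_space \<Rightarrow> real \<Rightarrow> 'w \<Rightarrow> 'a"
  assumes K: "(\<lambda>x. trans_law M Y x t) \<in> borel \<rightarrow>\<^sub>M prob_algebra borel"
    and inv: "invariant_pm M Y \<pi>" and t: "0 \<le> t"
  shows "\<pi> \<bind> (\<lambda>x. trans_law M Y x t) = \<pi>"
proof -
  have \<pi>: "prob_space \<pi>" "sets \<pi> = sets borel"
    using inv by (auto simp: invariant_pm_def prob_measures_def)
  then have \<pi>_space: "\<pi> \<in> space (prob_algebra borel)" by (simp add: space_prob_algebra)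
  interpret \<pi>: prob_space \<pi> by (rule \<pi>(1))
  have prob: "prob_space (trans_law M Y x t)" for x
    using measurable_space[OF K] by (simp add: space_prob_algebra)
  show ?thesis
  proof (rule measure_eqI)
    show "sets (\<pi> \<bind> (\<lambda>x. trans_law M Y x t)) = sets \<pi>" using sets_bind'[OF \<pi>_space K] \<pi>(2) by simp
    fix A assume "A \<in> sets (\<pi> \<bind> (\<lambda>x. trans_law M Y x t))"
    then have A: "A \<in> sets borel" using sets_bind'[OF \<pi>_space K] by simp
    have "emeasure (\<pi> \<bind> (\<lambda>x. trans_law M Y x t)) A = (\<integral>\<^sup>+x. emeasure (trans_law M Y x t) A \<partial>\<pi>)"
      by (rule emeasure_bind_prob_algebra[OF \<pi>_space K A])
    also have "\<dots> = (\<integral>\<^sup>+x. ennreal (measure (trans_law M Y x t) A) \<partial>\<pi>)"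
      by (simp add: finite_measure.emeasure_eq_measure[OF prob_space.finite_measure[OF prob]])
    also have "\<dots> = ennreal (\<integral>x. measure (trans_law M Y x t) A \<partial>\<pi>)"
    proof (rule nn_integral_eq_integral)
      have "(\<lambda>x. measure (trans_law M Y x t) A) \<in> borel_measurable \<pi>"
        unfolding measurable_cong_sets[OF \<pi>(2) refl]
        by (rule measurable_compose[OF K measurable_measure_prob_algebra[OF A]])
      then show "integrable \<pi> (\<lambda>x. measure (trans_law M Y x t) A)"
        by (intro \<pi>.integrable_const_bound[where B = 1])
          (auto simp: prob_space.prob_le_1[OF prob])
    qed simp
    also have "\<dots> = emeasure \<pi> A"
      using inv t A by (simp add: invariant_pm_def \<pi>.emeasure_eq_measure)
    finally show "emeasure (\<pi> \<bind> (\<lambda>x. trans_law M Y x t)) A = emeasure \<pi> A" .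
  qed
qed

lemma abs_integral_le_of_abs_le:
  fixes f :: "'a \<Rightarrow> real"
  assumes N: "N \<in> space (prob_algebra S)" and f: "f \<in> borel_measurable S" and f_le: "\<And>x. \<bar>f x\<bar> \<le> B"
  shows "\<bar>\<integral>x. f x \<partial>N\<bar> \<le> B"
proof -
  interpret prob_space N using N by (simp add: space_prob_algebra)
  have "f \<in> borel_measurable N" using f N
    by (simp add: space_prob_algebra cong: measurable_cong_sets)
  then have "integrable N f" using f_le by (intro integrable_const_bound[where B = B]) auto
  moreover have "f x \<le> B" "- B \<le> f x" for x using f_le[of x] by arith+
  ultimately have "(\<integral>x. f x \<partial>N) \<le> B" "- B \<le> (\<integral>x. f x \<partial>N)"
    by (auto intro!: integral_le_const integral_ge_const)
  then show ?thesis by simp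
qed

lemma integral_kernel_if_bind_eq:
  fixes K :: "'a \<Rightarrow> 'a measure" and f :: "'a \<Rightarrow> real"
  assumes K: "K \<in> S \<rightarrow>\<^sub>M prob_algebra S" and \<pi>: "\<pi> \<in> space (prob_algebra S)" and inv: "\<pi> \<bind> K = \<pi>"
    and f: "f \<in> borel_measurable S" and f_le: "\<And>x. \<bar>f x\<bar> \<le> B"
  shows "integrable \<pi> (\<lambda>x. \<integral>y. f y \<partial>K x)" and "(\<integral>x. (\<integral>y. f y \<partial>K x) \<partial>\<pi>) = (\<integral>x. f x \<partial>\<pi>)"
proof -
  have "prob_space \<pi>" and sets_eq: "sets \<pi> = sets S" using \<pi> by (auto simp: space_prob_algebra)
  then interpret prob_space \<pi> by simp
  have space_eq: "space \<pi> = space S" by (rule sets_eq_imp_space_eq[OF sets_eq])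
  have K_space: "K x \<in> space (prob_algebra S)" if "x \<in> space S" for x
    using measurable_space[OF K that] .
  have K\<pi>: "K \<in> \<pi> \<rightarrow>\<^sub>M subprob_algebra S"
    unfolding measurable_cong_sets[OF sets_eq refl] by (rule measurable_prob_algebraD[OF K])
  show "integrable \<pi> (\<lambda>x. \<integral>y. f y \<partial>K x)"
  proof (rule integrable_const_bound[where B = B])
    show "AE x in \<pi>. norm (\<integral>y. f y \<partial>K x) \<le> B"
      using abs_integral_le_of_abs_le[OF K_space f f_le] space_eq by (intro AE_I2) simp
    show "(\<lambda>x. \<integral>y. f y \<partial>K x) \<in> borel_measurable \<pi>"
      by (rule measurable_compose[OF K\<pi> integral_measurable_subprob_algebra[OF f]])
  qed
  have "AE x in \<pi>. emeasure (K x) (space (K x)) \<le> ennreal 1"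
    using K_space space_eq by (intro AE_I2)
      (simp add: space_prob_algebra prob_space.emeasure_space_1)
  then have "(\<integral>x. f x \<partial>(\<pi> \<bind> K)) = (\<integral>x. (\<integral>y. f y \<partial>K x) \<partial>\<pi>)"
    using f_le by (intro integral_bind[OF f _ K\<pi> finite_measure_axioms])
  then show "(\<integral>x. (\<integral>y. f y \<partial>K x) \<partial>\<pi>) = (\<integral>x. f x \<partial>\<pi>)" using inv by simp
qed

lemma abs_integral_diff_le_var_norm_diff:
  fixes P Q :: "'a::euclidean_space measure" and f :: "'a \<Rightarrow> real"
  assumes P: "P \<in> space (prob_algebra borel)" and Q: "Q \<in> space (prob_algebra borel)"
    and f: "f \<in> borel_measurable borel" and f_le: "\<And>x. \<bar>f x\<bar> \<le> B" and B: "0 < B"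
  shows "\<bar>(\<integral>x. f x \<partial>P) - (\<integral>x. f x \<partial>Q)\<bar> \<le> B * var_norm_diff P Q"
proof -
  define S where "S = {g :: 'a \<Rightarrow> real. g \<in> borel_measurable borel \<and> (\<forall>x. \<bar>g x\<bar> \<le> 1)}"
  have "bdd_above ((\<lambda>g. \<bar>(\<integral>x. g x \<partial>P) - (\<integral>x. g x \<partial>Q)\<bar>) ` S)"
  proof (rule bdd_aboveI2[where M = 2])
    fix g assume "g \<in> S"
    then have g: "g \<in> borel_measurable borel" "\<And>x. \<bar>g x\<bar> \<le> 1" by (auto simp: S_def)
    show "\<bar>(\<integral>x. g x \<partial>P) - (\<integral>x. g x \<partial>Q)\<bar> \<le> 2"
      using abs_integral_le_of_abs_le[OF P g] abs_integral_le_of_abs_le[OF Q g] by linarith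
  qed
  moreover have "(\<lambda>x. f x / B) \<in> S" unfolding S_def using f f_le B by auto
  ultimately have "\<bar>(\<integral>x. f x / B \<partial>P) - (\<integral>x. f x / B \<partial>Q)\<bar> \<le> var_norm_diff P Q"
    unfolding var_norm_diff_def S_def[symmetric] by (rule cSUP_upper2) simp
  then show ?thesis using B by (simp add: diff_divide_distrib[symmetric] divide_le_eq mult.commute)
qed

lemma abs_integral_le_of_moment_le:
  fixes \<nu> :: "'a::euclidean_space measure" and F :: "'a \<Rightarrow> real"
  assumes \<nu>: "\<nu> \<in> PpM p Ms" and F: "F \<in> borel_measurable borel"
    and F_le: "\<And>x. \<bar>F x\<bar> \<le> c1 + c2 * norm x powr p" and c2: "0 \<le> c2" and Ms: "0 \<le> Ms"
  shows "\<bar>\<integral>x. F x \<partial>\<nu>\<bar> \<le> c1 + c2 * Ms"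
proof -
  have "prob_space \<nu>" and sets: "sets \<nu> = sets borel" and moment: "moment p \<nu> \<le> ennreal Ms"
    using \<nu> by (auto simp: PpM_def prob_measures_def)
  then interpret prob_space \<nu> by simp
  note meas = measurable_cong_sets[OF sets refl]
  have p_int: "integrable \<nu> (\<lambda>x. norm x powr p)"
    using moment by (intro integrableI_bounded) (auto simp: meas moment_def order_le_less_trans)
  have "ennreal (\<integral>x. norm x powr p \<partial>\<nu>) = moment p \<nu>"
    unfolding moment_def by (rule nn_integral_eq_integral[symmetric]) (use p_int in auto)
  then have "ennreal (\<integral>x. norm x powr p \<partial>\<nu>) \<le> ennreal Ms" using moment by simp
  then have p_le: "(\<integral>x. norm x powr p \<partial>\<nu>) \<le> Ms" using Ms by simp
  have bound_int: "integrable \<nu> (\<lambda>x. c1 + c2 * norm x powr p)" using p_int by simp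
  have "integrable \<nu> F"
  proof (rule Bochner_Integration.integrable_bound[OF bound_int])
    show "F \<in> borel_measurable \<nu>" unfolding meas by (rule F)
    show "AE x in \<nu>. norm (F x) \<le> norm (c1 + c2 * norm x powr p)"
      by (intro AE_I2) (metis F_le abs_ge_self order_trans real_norm_def)
  qed
  then have "\<bar>\<integral>x. F x \<partial>\<nu>\<bar> \<le> (\<integral>x. c1 + c2 * norm x powr p \<partial>\<nu>)"
    using bound_int F_le by (intro order.trans[OF integral_abs_bound] integral_mono) auto
  also have "\<dots> = c1 + c2 * (\<integral>x. norm x powr p \<partial>\<nu>)" using p_int by (simp add: prob_space)
  also have "\<dots> \<le> c1 + c2 * Ms" using p_le c2 by (simp add: mult_left_mono)
  finally show ?thesis .
qed

lemma integral_invariant_diff_le: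
  fixes K\<nu> K\<mu> :: "'a::euclidean_space \<Rightarrow> 'a measure" and f :: "'a \<Rightarrow> real"
  assumes K\<nu>: "K\<nu> \<in> borel \<rightarrow>\<^sub>M prob_algebra borel" and K\<mu>: "K\<mu> \<in> borel \<rightarrow>\<^sub>M prob_algebra borel"
    and inv: "\<pi>\<nu> \<bind> K\<nu> = \<pi>\<nu>" and \<pi>\<nu>: "\<pi>\<nu> \<in> PpM p Ms" and \<pi>\<mu>: "\<pi>\<mu> \<in> prob_measures"
    and f: "f \<in> borel_measurable borel" and f_le: "\<And>x. \<bar>f x\<bar> \<le> B" and B: "0 < B"
    and near: "\<And>x. x \<in> cball 0 R \<Longrightarrow> \<bar>(\<integral>y. f y \<partial>K\<nu> x) - (\<integral>y. f y \<partial>K\<mu> x)\<bar> \<le> \<delta>"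
    and var: "\<And>x. var_norm_diff \<pi>\<mu> (K\<mu> x) \<le> (1 + norm x powr p) * h"
    and p: "0 \<le> p" and R: "0 < R" and h: "0 \<le> h" and Ms: "0 \<le> Ms"
  shows "\<bar>(\<integral>x. f x \<partial>\<pi>\<nu>) - (\<integral>x. f x \<partial>\<pi>\<mu>)\<bar> \<le> \<delta> + B * h + (2 * B * R powr - p + B * h) * Ms"
proof -
  have \<pi>\<nu>_space: "\<pi>\<nu> \<in> space (prob_algebra borel)" and \<pi>\<mu>_space: "\<pi>\<mu> \<in> space (prob_algebra borel)"
    using \<pi>\<nu> \<pi>\<mu> by (auto simp: PpM_def prob_measures_def space_prob_algebra)
  have K\<nu>_space: "K\<nu> x \<in> space (prob_algebra borel)"
    and K\<mu>_space: "K\<mu> x \<in> space (prob_algebra borel)" for x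
    using measurable_space[OF K\<nu>] measurable_space[OF K\<mu>] by auto
  have \<delta>: "0 \<le> \<delta>" using near[of 0] R by (intro order.trans[OF abs_ge_zero]) auto
  define I where "I = (\<integral>x. f x \<partial>\<pi>\<mu>)"
  define F where "F x = (\<integral>y. f y \<partial>K\<nu> x) - I" for x
  have "(\<lambda>x. \<integral>y. f y \<partial>K\<nu> x) \<in> borel_measurable borel"
    by (rule measurable_compose[OF measurable_prob_algebraD[OF K\<nu>]
      integral_measurable_subprob_algebra[OF f]])
  then have F_meas: "F \<in> borel_measurable borel" unfolding F_def by simp
  have F_integral: "(\<integral>x. F x \<partial>\<pi>\<nu>) = (\<integral>x. f x \<partial>\<pi>\<nu>) - I"
  proof -
    interpret prob_space \<pi>\<nu> using \<pi>\<nu>_space by (simp add: space_prob_algebra)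
    show ?thesis
      using integral_kernel_if_bind_eq[OF K\<nu> \<pi>\<nu>_space inv f f_le] by (simp add: F_def prob_space)
  qed
  have F_le: "\<bar>F x\<bar> \<le> (\<delta> + B * h) + (2 * B * R powr - p + B * h) * norm x powr p" for x
  proof -
    have "\<bar>(\<integral>y. f y \<partial>K\<nu> x) - (\<integral>y. f y \<partial>K\<mu> x)\<bar> \<le> \<delta> + 2 * B * R powr - p * norm x powr p"
    proof (cases "x \<in> cball 0 R")
      case True
      have "0 \<le> 2 * B * R powr - p * norm x powr p" using B by simp
      then show ?thesis using near[OF True] by linarith
    next
      case False
      then have "1 \<le> R powr - p * norm x powr p"
        using R p by (simp add: powr_minus divide_simps powr_mono2)
      then have "2 * B \<le> 2 * B * R powr - p * norm x powr p" using B by simp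
      moreover have "\<bar>(\<integral>y. f y \<partial>K\<nu> x) - (\<integral>y. f y \<partial>K\<mu> x)\<bar> \<le> 2 * B"
        using abs_integral_le_of_abs_le[OF K\<nu>_space[of x] f f_le]
          abs_integral_le_of_abs_le[OF K\<mu>_space[of x] f f_le] by linarith
      ultimately show ?thesis using \<delta> by linarith
    qed
    moreover have "\<bar>I - (\<integral>y. f y \<partial>K\<mu> x)\<bar> \<le> B * ((1 + norm x powr p) * h)"
      unfolding I_def
      by (rule order.trans[OF abs_integral_diff_le_var_norm_diff[OF \<pi>\<mu>_space K\<mu>_space f f_le B]])
        (use var B in \<open>simp add: mult_left_mono\<close>)
    ultimately show ?thesis unfolding F_def by (simp add: algebra_simps abs_le_iff)
  qed
  have "\<bar>\<integral>x. F x \<partial>\<pi>\<nu>\<bar> \<le> (\<delta> + B * h) + (2 * B * R powr - p + B * h) * Ms"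
    using B h by (intro abs_integral_le_of_moment_le[OF \<pi>\<nu> F_meas F_le]) (auto simp: Ms)
  then show ?thesis using F_integral unfolding I_def by simp
qed

lemma PpM_subset_Pp: "PpM p Ms \<subseteq> Pp p"
  by (auto simp: PpM_def Pp_def intro: le_less_trans[OF _ ennreal_less_top])

theorem proposition2p3:
  fixes M :: "'w measure"
    and \<nu> :: "'a::euclidean_space measure"
    and Z :: "real \<Rightarrow> 'w \<Rightarrow> 'a"
    and b :: "'a \<Rightarrow> 'a measure \<Rightarrow> 'a"
    and Y :: "'a measure \<Rightarrow> 'a \<Rightarrow> real \<Rightarrow> 'w \<Rightarrow> 'a"
    and \<pi> :: "'a measure \<Rightarrow> 'a measure"
    and \<beta>s \<beta> lam1 lam2 Cb \<theta>1 \<theta>2 \<theta>3 \<theta>4 Ms :: real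
  assumes levy: "pure_jump_levy M \<nu> Z"
    and nu: "levy_measure_cond \<nu> \<beta>s"
    and betas: "0 < \<beta>s" "\<beta>s \<le> 2"
    and sol: "\<And>\<mu> x. \<mu> \<in> Pp (\<beta> + \<theta>1 - 1) \<Longrightarrow> sde_solution M Z b \<mu> x (Y \<mu> x)"
    \<comment> \<open>(A1)\<close>
    and A1_consts: "0 < \<beta>" "\<beta> \<le> \<beta>s" "0 < lam1" "0 < lam2" "0 < Cb" "0 < \<theta>1" "0 \<le> \<theta>2"
                   "0 < \<theta>4" "\<theta>1 \<ge> 1 - \<beta> / 2" "\<theta>2 < 1 + \<theta>1"
                   "0 < \<theta>3" "\<theta>3 \<le> \<beta> + \<theta>1 - 1"
    and A1_case: "(\<beta> + \<theta>1 - 1) * (1 - max (\<beta> + \<theta>2 - 2) 0 / (\<beta> + \<theta>1 - 1)) > \<theta>3 * \<theta>4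
                  \<or> ((\<beta> + \<theta>1 - 1) * (1 - max (\<beta> + \<theta>2 - 2) 0 / (\<beta> + \<theta>1 - 1)) = \<theta>3 * \<theta>4
                      \<and> lam1 > lam2)"
    and A1: "\<And>x \<mu>. \<mu> \<in> Pp (\<beta> + \<theta>1 - 1) \<Longrightarrow>
               x \<bullet> b x \<mu> \<le> Cb - lam1 * norm x powr (1 + \<theta>1)
                 + lam2 * (1 + norm x ^ 2) powr (\<theta>2 / 2) * (\<integral>y. norm y powr \<theta>3 \<partial>\<mu>) powr \<theta>4"
    \<comment> \<open>(A2)\<close>
    and A2_Feller: "\<And>\<mu>. \<mu> \<in> Pp (\<beta> + \<theta>1 - 1) \<Longrightarrow> Cb_Feller M (Y \<mu>)"
    and A2_inv: "\<And>\<mu>. \<mu> \<in> Pp (\<beta> + \<theta>1 - 1) \<Longrightarrow> invariant_pm M (Y \<mu>) (\<pi> \<mu>)"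
    and A2_unique: "\<And>\<mu> \<rho>. \<mu> \<in> Pp (\<beta> + \<theta>1 - 1) \<Longrightarrow> invariant_pm M (Y \<mu>) \<rho> \<Longrightarrow> \<rho> = \<pi> \<mu>"
    \<comment> \<open>M*\<close>
    and Ms_pos: "0 < Ms"
    and Ms_inv: "\<And>\<mu>. \<mu> \<in> PpM (\<beta> + \<theta>1 - 1) Ms \<Longrightarrow> \<pi> \<mu> \<in> PpM (\<beta> + \<theta>1 - 1) Ms"
    \<comment> \<open>(A31)\<close>
    and A31: "\<And>\<mu>. \<mu> \<in> PpM (\<beta> + \<theta>1 - 1) Ms \<Longrightarrow>
               \<exists>h :: real \<Rightarrow> real. (\<forall>t\<ge>0. h t \<ge> 0) \<and> (h \<longlongrightarrow> 0) at_top \<and>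
                 (\<forall>x t. t \<ge> 0 \<longrightarrow>
                    var_norm_diff (\<pi> \<mu>) (trans_law M (Y \<mu>) x t)
                      \<le> (1 + norm x powr (\<beta> + \<theta>1 - 1)) * h t)"
    \<comment> \<open>(A32)\<close>
    and A32_mono: "\<And>n \<mu>. n \<ge> 1 \<Longrightarrow> \<mu> \<in> PpM (\<beta> + \<theta>1 - 1) Ms \<Longrightarrow>
               \<exists>K>0. \<forall>x y. max (norm x) (norm y) \<le> real n \<longrightarrow>
                 (x - y) \<bullet> (b x \<mu> - b y \<mu>) \<le> K * norm (x - y) ^ 2"
    and A32_cont: "\<And>n \<mu> \<mu>s. n \<ge> 1 \<Longrightarrow> \<mu> \<in> PpM (\<beta> + \<theta>1 - 1) Ms \<Longrightarrow>
               (\<forall>k. \<mu>s k \<in> PpM (\<beta> + \<theta>1 - 1) Ms) \<Longrightarrow> weak_conv_seq \<mu>s \<mu> \<Longrightarrow>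
               (\<forall>\<epsilon>>0. \<forall>\<^sub>F k in sequentially.
                  \<forall>x. norm x \<le> real n \<longrightarrow> norm (b x (\<mu>s k) - b x \<mu>) \<le> \<epsilon>)"
  shows "\<forall>f :: 'a \<Rightarrow> real. \<forall>\<mu> \<mu>s.
           continuous_on UNIV f \<and> bounded (range f) \<and> \<mu> \<in> PpM (\<beta> + \<theta>1 - 1) Ms \<and>
           (\<forall>k. \<mu>s k \<in> PpM (\<beta> + \<theta>1 - 1) Ms) \<and> weak_conv_seq \<mu>s \<mu> \<longrightarrow>
           (\<lambda>k. \<bar>(\<integral>x. f x \<partial>(\<pi> (\<mu>s k))) - (\<integral>x. f x \<partial>(\<pi> \<mu>))\<bar>) \<longlonglongrightarrow> 0"
proof (intro allI impI, elim conjE)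
  fix f :: "'a \<Rightarrow> real" and \<mu> :: "'a measure" and \<mu>s :: "nat \<Rightarrow> 'a measure"
  assume f: "continuous_on UNIV f" and f_bdd: "bounded (range f)"
    and \<mu>: "\<mu> \<in> PpM (\<beta> + \<theta>1 - 1) Ms" and \<mu>s: "\<forall>k. \<mu>s k \<in> PpM (\<beta> + \<theta>1 - 1) Ms"
    and weak: "weak_conv_seq \<mu>s \<mu>"
  have p: "0 < \<beta> + \<theta>1 - 1" using A1_consts(1,9) by linarith
  have P: "\<nu> \<in> Pp (\<beta> + \<theta>1 - 1)" if "\<nu> \<in> PpM (\<beta> + \<theta>1 - 1) Ms" for \<nu> :: "'a measure"
    using that PpM_subset_Pp by blast
  have kernel: "(\<lambda>x. trans_law M (Y \<nu>) x t) \<in> borel \<rightarrow>\<^sub>M prob_algebra borel"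
    if "\<nu> \<in> PpM (\<beta> + \<theta>1 - 1) Ms" "0 \<le> t" for \<nu> t
    using levy sol[OF P[OF that(1)]] A2_Feller[OF P[OF that(1)]] that(2)
    by (intro trans_law_measurable) (auto simp: pure_jump_levy_def sde_solution_def)
  obtain B where B: "0 < B" "\<And>x. \<bar>f x\<bar> \<le> B" using f_bdd by (auto simp: bounded_pos)
  obtain h where h: "\<forall>t\<ge>0. 0 \<le> h t" "(h \<longlongrightarrow> 0) at_top" and var: "\<forall>x t. 0 \<le> t \<longrightarrow>
      var_norm_diff (\<pi> \<mu>) (trans_law M (Y \<mu>) x t) \<le> (1 + norm x powr (\<beta> + \<theta>1 - 1)) * h t"
    using A31[OF \<mu>] by blast
  have lip: "one_sided_lipschitz_on_balls (\<lambda>u. b u \<mu>)"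
    using A32_mono[OF _ \<mu>] by (simp add: one_sided_lipschitz_on_balls_def)
  have conv: "tendsto_uniformly_on_balls (\<lambda>k u. b u (\<mu>s k)) (\<lambda>u. b u \<mu>)"
    using A32_cont[OF _ \<mu> \<mu>s weak] by (simp add: tendsto_uniformly_on_balls_def)
  define e where "e t = B * h t + (2 * B * t powr - (\<beta> + \<theta>1 - 1) + B * h t) * Ms" for t
  have "((\<lambda>t. t powr - (\<beta> + \<theta>1 - 1)) \<longlongrightarrow> 0) at_top"
    using p by (intro tendsto_neg_powr filterlim_ident) simp
  then have "(e \<longlongrightarrow> 0) at_top"
    unfolding e_def
    by (intro tendsto_add_zero[OF tendsto_mult_right_zero[OF h(2)]] tendsto_mult_left_zero
        tendsto_add_zero[OF tendsto_mult_right_zero tendsto_mult_right_zero[OF h(2)]])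
  moreover have "eventually (\<lambda>t. \<forall>\<delta>>0. eventually (\<lambda>k.
      \<bar>\<bar>(\<integral>x. f x \<partial>\<pi> (\<mu>s k)) - (\<integral>x. f x \<partial>\<pi> \<mu>)\<bar>\<bar> \<le> e t + \<delta>) sequentially) at_top"
    using eventually_ge_at_top[of "1::real"]
  proof (eventually_elim, intro allI impI)
    fix t \<delta> :: real assume t: "1 \<le> t" and \<delta>: "0 < \<delta>"
    have "eventually (\<lambda>k. \<forall>x\<in>cball 0 t. \<bar>(\<integral>y. f y \<partial>trans_law M (Y (\<mu>s k)) x t)
        - (\<integral>y. f y \<partial>trans_law M (Y \<mu>) x t)\<bar> \<le> \<delta>) sequentially"
      using sol P \<mu> \<mu>s lip conv t \<delta> f B(2)
      by (intro trans_law_integral_tendsto_uniformly[OF levy]) auto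
    then show "eventually (\<lambda>k.
        \<bar>\<bar>(\<integral>x. f x \<partial>\<pi> (\<mu>s k)) - (\<integral>x. f x \<partial>\<pi> \<mu>)\<bar>\<bar> \<le> e t + \<delta>) sequentially"
    proof eventually_elim
      case (elim k)
      have t0: "0 \<le> t" and \<mu>k: "\<mu>s k \<in> PpM (\<beta> + \<theta>1 - 1) Ms" using t \<mu>s by auto
      have "\<bar>(\<integral>x. f x \<partial>\<pi> (\<mu>s k)) - (\<integral>x. f x \<partial>\<pi> \<mu>)\<bar>
          \<le> \<delta> + B * h t + (2 * B * t powr - (\<beta> + \<theta>1 - 1) + B * h t) * Ms"
      proof (rule integral_invariant_diff_le[OF kernel[OF \<mu>k t0] kernel[OF \<mu> t0]
            bind_trans_law_invariant_pm[OF kernel[OF \<mu>k t0] A2_inv[OF P[OF \<mu>k]] t0]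
            Ms_inv[OF \<mu>k]])
        show "\<pi> \<mu> \<in> prob_measures" using Ms_inv[OF \<mu>] by (simp add: PpM_def)
        show "f \<in> borel_measurable borel" by (rule borel_measurable_continuous_onI[OF f])
        show "0 \<le> \<beta> + \<theta>1 - 1" "0 < t" "0 \<le> h t" "0 \<le> Ms" using p t h(1) Ms_pos by auto
      qed (simp_all add: B elim var t0)
      then show ?case by (simp add: e_def)
    qed
  qed
  ultimately show "(\<lambda>k. \<bar>(\<integral>x. f x \<partial>\<pi> (\<mu>s k)) - (\<integral>x. f x \<partial>\<pi> \<mu>)\<bar>) \<longlonglongrightarrow> 0"
    by (intro tendsto_zero_if_eventually_approx[where F = at_top]) simp_all
qed

end
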